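(* Let $1\le p<\infty$ and let $X=\ell_p(\mathbb Z_+)$ (real or complex). Let $\mathbf w=(w_n)_{n\ge1}$ be a bounded sequence of non-zero scalars and let $B_{\mathbf w}$ be the weighted backward shift on $X$. Then $B_{\mathbf w}$ admits a Borel probability measure $m$ on $X$ which is $B_{\mathbf w}$-invariant and different from the Dirac mass $\delta_0$ if and only if $\sum_{n=1}^\infty \frac{1}{|w_1\cdots w_n|^p}<\infty$.
   Context: $(e_n)_{n\ge0}$ is the canonical basis of $\ell_p(\mathbb Z_+)$. The weighted backward shift is defined by $B_{\mathbf w}e_0=0$ and $B_{\mathbf w}e_n=w_ne_{n-1}$ for $n\ge1$. A Borel probability measure $m$ is $B_{\mathbf w}$-invariant if $m(B_{\mathbf w}^{-1}(A))=m(A)$ for every Borel set $A\subseteq X$. *)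

theory Defs
  imports "HOL-Probability.Probability"
begin

definition lp :: "real \<Rightarrow> (nat \<Rightarrow> 'a::real_normed_vector) set" where
  "lp p = {x. summable (\<lambda>n. norm (x n) powr p)}"

definition lp_norm :: "real \<Rightarrow> (nat \<Rightarrow> 'a::real_normed_vector) \<Rightarrow> real" where
  "lp_norm p x = (\<Sum>n. norm (x n) powr p) powr (1 / p)"

definition lp_open :: "real \<Rightarrow> (nat \<Rightarrow> 'a::real_normed_vector) set \<Rightarrow> bool" where
  "lp_open p U \<longleftrightarrow> U \<subseteq> lp p \<and>
     (\<forall>x\<in>U. \<exists>e>0. \<forall>y\<in>lp p. lp_norm p (\<lambda>n. y n - x n) < e \<longrightarrow> y \<in> U)"

definition lp_borel :: "real \<Rightarrow> (nat \<Rightarrow> 'a::real_normed_vector) measure" where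
  "lp_borel p = sigma (lp p) {U. lp_open p U}"

text \<open>Weighted backward shift: (B_w x)_n = w_(n+1) x_(n+1); the weight w 0 is unused.\<close>
definition bshift :: "(nat \<Rightarrow> 'a::real_normed_field) \<Rightarrow> (nat \<Rightarrow> 'a) \<Rightarrow> (nat \<Rightarrow> 'a)" where
  "bshift w x = (\<lambda>n. w (Suc n) * x (Suc n))"

end

theory Submission
  imports Defs
begin

(* If the series converges, x_n = 1 / (w_1 ... w_n) is a nonzero fixed point of B_w in l_p, and
   the Dirac mass at x is invariant.
   Conversely, let m be invariant and different from the Dirac mass at 0, and write
   W_n = w_1 ... w_n. Some coordinate is nonzero with positive probability, so for some k and
   eps > 0 the set D_k = {x. eps < |W_k x_k|} has mass delta > 0. Since B_w^-1 (D_n) = D_(n+1),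
   invariance gives every D_n mass delta, and |x_n|^p >= (eps / |W_n|)^p on D_n. Integrating
   sum_n (eps / |W_n|)^p 1_(D_n) over a set {x. ||x||_p^p <= i} of mass > 1 - delta/2 bounds
   the partial sums of sum_n (eps / |W_n|)^p by 2 i / delta. *)

lemma space_lp_borel: "space (lp_borel p) = lp p"
  unfolding lp_borel_def by (rule space_measure_of) (auto simp: lp_open_def)

lemma lp_open_in_sets_lp_borel:
  assumes "lp_open p U"
  shows "U \<in> sets (lp_borel p)"
proof -
  have "Collect (lp_open p) \<subseteq> Pow (lp p)"
    by (auto simp: lp_open_def)
  then show ?thesis
    unfolding lp_borel_def using assms by (subst sets_measure_of) (auto intro: sigma_sets.Basic)
qed

lemma measurable_lp_borelI:
  assumes "f \<in> lp p \<rightarrow> lp p" "\<And>U. lp_open p U \<Longrightarrow> lp_open p (f -` U \<inter> lp p)"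
  shows "f \<in> lp_borel p \<rightarrow>\<^sub>M lp_borel p"
proof -
  have "Collect (lp_open p) \<subseteq> Pow (lp p)"
    by (auto simp: lp_open_def)
  then show ?thesis
    unfolding lp_borel_def[of p]
  proof (rule measurable_measure_of)
    show "f \<in> space (sigma (lp p) (Collect (lp_open p))) \<rightarrow> lp p"
      using assms(1) space_lp_borel[of p] unfolding lp_borel_def by metis
    show "f -` U \<inter> space (sigma (lp p) (Collect (lp_open p))) \<in> sets (sigma (lp p) (Collect (lp_open p)))"
      if "U \<in> Collect (lp_open p)" for U
      using lp_open_in_sets_lp_borel[OF assms(2)] space_lp_borel[of p] that
      unfolding lp_borel_def by (metis mem_Collect_eq)
  qed
qed

lemma powr_add_le_two_powr:
  fixes a b :: real
  assumes "0 \<le> a" "0 \<le> b" "0 < p"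
  shows "(a + b) powr p \<le> 2 powr p * (a powr p + b powr p)"
proof -
  have "(a + b) powr p \<le> (2 * max a b) powr p"
    using assms by (intro powr_mono2) auto
  also have "\<dots> = 2 powr p * max a b powr p"
    using assms by (simp add: powr_mult)
  also have "max a b powr p \<le> a powr p + b powr p"
    using assms by (auto simp: max_def)
  finally show ?thesis by simp
qed

lemma lp_diff:
  fixes x y :: "nat \<Rightarrow> 'a::real_normed_vector"
  assumes "x \<in> lp p" "y \<in> lp p" "0 < p"
  shows "(\<lambda>n. y n - x n) \<in> lp p"
proof -
  have bound: "norm (y n - x n) powr p \<le> 2 powr p * (norm (y n) powr p + norm (x n) powr p)" for n
  proof -
    have "norm (y n - x n) powr p \<le> (norm (y n) + norm (x n)) powr p"
      using assms by (intro powr_mono2) (auto intro: norm_triangle_ineq4)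
    also have "\<dots> \<le> 2 powr p * (norm (y n) powr p + norm (x n) powr p)"
      using assms by (intro powr_add_le_two_powr) auto
    finally show ?thesis .
  qed
  have "summable (\<lambda>n. 2 powr p * (norm (y n) powr p + norm (x n) powr p))"
    using assms by (intro summable_mult summable_add) (auto simp: lp_def)
  then show ?thesis
    unfolding lp_def mem_Collect_eq by (rule summable_comparison_test') (use bound in auto)
qed

lemma norm_le_lp_norm:
  fixes z :: "nat \<Rightarrow> 'a::real_normed_vector"
  assumes "z \<in> lp p" "0 < p"
  shows "norm (z n) \<le> lp_norm p z"
proof -
  have "norm (z n) powr p \<le> (\<Sum>n. norm (z n) powr p)"
    using sum_le_suminf[of "\<lambda>n. norm (z n) powr p" "{n}"] assms by (auto simp: lp_def)
  then have "(norm (z n) powr p) powr (1/p) \<le> (\<Sum>n. norm (z n) powr p) powr (1/p)"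
    using assms by (intro powr_mono2) auto
  then show ?thesis
    using assms by (simp add: lp_norm_def powr_powr)
qed

lemma measurable_coordinate_lp_borel:
  assumes "0 < p"
  shows "(\<lambda>x. x n) \<in> borel_measurable (lp_borel p :: (nat \<Rightarrow> 'a::real_normed_vector) measure)"
proof (rule borel_measurableI)
  fix S :: "'a set"
  assume "open S"
  have "lp_open p ((\<lambda>x. x n) -` S \<inter> lp p)"
    unfolding lp_open_def
  proof safe
    fix x
    assume x: "x \<in> lp p" "x n \<in> S"
    then obtain e where e: "e > 0" "ball (x n) e \<subseteq> S"
      using \<open>open S\<close> open_contains_ball by blast
    have "y n \<in> S" if "y \<in> lp p" "lp_norm p (\<lambda>n. y n - x n) < e" for y
    proof -
      have "dist (x n) (y n) \<le> lp_norm p (\<lambda>n. y n - x n)"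
        using norm_le_lp_norm[OF lp_diff[OF x(1) that(1) assms] assms]
        by (simp add: dist_norm norm_minus_commute)
      then show ?thesis
        using e that by auto
    qed
    then show "\<exists>e>0. \<forall>y\<in>lp p. lp_norm p (\<lambda>n. y n - x n) < e \<longrightarrow> y \<in> (\<lambda>x. x n) -` S \<inter> lp p"
      using e by blast
  qed
  then show "(\<lambda>x. x n) -` S \<inter> space (lp_borel p) \<in> sets (lp_borel p)"
    by (simp add: space_lp_borel lp_open_in_sets_lp_borel)
qed

lemma measurable_scaled_coordinate_lp_borel:
  assumes "0 < p"
  shows "(\<lambda>x. c * x n) \<in> borel_measurable (lp_borel p :: (nat \<Rightarrow> 'a::real_normed_field) measure)"
proof -
  have "(\<lambda>y. c * y) \<in> borel_measurable (borel :: 'a measure)"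
    by (intro borel_measurable_continuous_onI continuous_intros)
  from measurable_compose[OF measurable_coordinate_lp_borel[OF assms] this] show ?thesis .
qed

lemma lp_norm_bshift_le:
  fixes w z :: "nat \<Rightarrow> 'a::real_normed_field"
  assumes z: "z \<in> lp p" and p: "0 < p" and M: "0 \<le> M" "\<forall>n\<ge>1. norm (w n) \<le> M"
  shows "bshift w z \<in> lp p" and "lp_norm p (bshift w z) \<le> M * lp_norm p z"
proof -
  have z_sum: "summable (\<lambda>n. norm (z n) powr p)"
    using z by (simp add: lp_def)
  then have z_sum_Suc: "summable (\<lambda>n. norm (z (Suc n)) powr p)"
    by (subst summable_Suc_iff)
  have le: "norm (bshift w z n) powr p \<le> M powr p * norm (z (Suc n)) powr p" for n
    using M p unfolding bshift_def norm_mult powr_mult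
    by (intro mult_right_mono powr_mono2) auto
  have bz_sum: "summable (\<lambda>n. norm (bshift w z n) powr p)"
    by (rule summable_comparison_test'[OF summable_mult[OF z_sum_Suc]]) (use le in auto)
  then show "bshift w z \<in> lp p"
    by (simp add: lp_def)
  have "(\<Sum>n. norm (bshift w z n) powr p) \<le> (\<Sum>n. M powr p * norm (z (Suc n)) powr p)"
    by (rule suminf_le[OF le bz_sum summable_mult[OF z_sum_Suc]])
  also have "\<dots> = M powr p * (\<Sum>n. norm (z (Suc n)) powr p)"
    using z_sum_Suc by (rule suminf_mult)
  also have "\<dots> \<le> M powr p * (\<Sum>n. norm (z n) powr p)"
    using suminf_split_head[OF z_sum] by (intro mult_left_mono) auto
  finally have "lp_norm p (bshift w z) \<le> (M powr p * (\<Sum>n. norm (z n) powr p)) powr (1/p)"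
    unfolding lp_norm_def using p by (intro powr_mono2 suminf_nonneg bz_sum) auto
  also have "\<dots> = M * lp_norm p z"
    using M p z_sum by (simp add: powr_mult powr_powr lp_norm_def suminf_nonneg)
  finally show "lp_norm p (bshift w z) \<le> M * lp_norm p z" .
qed

lemma bshift_diff: "bshift w (\<lambda>n. y n - x n) = (\<lambda>n. bshift w y n - bshift w x n)"
  by (simp add: bshift_def fun_eq_iff algebra_simps)

lemma measurable_bshift:
  fixes w :: "nat \<Rightarrow> 'a::real_normed_field"
  assumes p: "0 < p" and "bounded (w ` {1..})"
  shows "bshift w \<in> lp_borel p \<rightarrow>\<^sub>M lp_borel p"
proof -
  obtain M where M: "0 < M" "\<forall>n\<ge>1. norm (w n) \<le> M"
    using assms(2) by (auto simp: bounded_pos)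
  note bshift_lp = lp_norm_bshift_le[OF _ p less_imp_le[OF M(1)] M(2)]
  show ?thesis
  proof (rule measurable_lp_borelI)
    show "bshift w \<in> lp p \<rightarrow> lp p"
      using bshift_lp(1) by blast
    fix U :: "(nat \<Rightarrow> 'a) set"
    assume U: "lp_open p U"
    show "lp_open p (bshift w -` U \<inter> lp p)"
      unfolding lp_open_def
    proof safe
      fix x
      assume x: "x \<in> lp p" "bshift w x \<in> U"
      then obtain e where e: "e > 0"
        and e_U: "\<forall>y\<in>lp p. lp_norm p (\<lambda>n. y n - bshift w x n) < e \<longrightarrow> y \<in> U"
        using U unfolding lp_open_def by blast
      have "bshift w y \<in> U" if y: "y \<in> lp p" "lp_norm p (\<lambda>n. y n - x n) < e / M" for y
      proof -
        have "lp_norm p (\<lambda>n. bshift w y n - bshift w x n) \<le> M * lp_norm p (\<lambda>n. y n - x n)"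
          using bshift_lp(2)[OF lp_diff[OF x(1) y(1) p]] by (simp add: bshift_diff)
        also have "\<dots> < e"
          using y(2) M(1) by (simp add: field_simps)
        finally show ?thesis
          using e_U bshift_lp(1)[OF y(1)] by blast
      qed
      then show "\<exists>e>0. \<forall>y\<in>lp p. lp_norm p (\<lambda>n. y n - x n) < e \<longrightarrow> y \<in> bshift w -` U \<inter> lp p"
        using e M(1) by (intro exI[of _ "e / M"]) auto
    qed
  qed
qed

lemma inj_on_return_lp_borel:
  assumes "0 < p"
  shows "inj_on (return (lp_borel p :: (nat \<Rightarrow> 'a::real_normed_vector) measure)) (lp p)"
proof (rule inj_onI, rule ccontr)
  fix x y :: "nat \<Rightarrow> 'a"
  assume x: "x \<in> lp p" and y: "y \<in> lp p" and xy: "return (lp_borel p) x = return (lp_borel p) y"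
    and "x \<noteq> y"
  then obtain n where "x n \<noteq> y n"
    by auto
  define C where "C = (\<lambda>z. z n) -` {x n} \<inter> space (lp_borel p)"
  have "C \<in> sets (lp_borel p)"
    unfolding C_def by (rule measurable_sets[OF measurable_coordinate_lp_borel[OF assms]]) auto
  then have "emeasure (return (lp_borel p) x) C \<noteq> emeasure (return (lp_borel p) y) C"
    using x y \<open>x n \<noteq> y n\<close> by (auto simp: C_def space_lp_borel)
  then show False
    using xy by simp
qed

lemma emeasure_return_vimage_fixed_point:
  assumes "f \<in> N \<rightarrow>\<^sub>M N" "x \<in> space N" "f x = x" "A \<in> sets N"
  shows "emeasure (return N x) (f -` A \<inter> space (return N x)) = emeasure (return N x) A"
  using assms measurable_sets[OF assms(1,4)] by (simp split: split_indicator)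

lemma bshift_fixes_inverse_partial_prod:
  fixes w :: "nat \<Rightarrow> 'a::real_normed_field"
  assumes "\<forall>n\<ge>1. w n \<noteq> 0"
  shows "bshift w (\<lambda>n. inverse (\<Prod>k=1..n. w k)) = (\<lambda>n. inverse (\<Prod>k=1..n. w k))"
proof
  fix n
  have "(\<Prod>k=1..n. w k) \<noteq> 0" "w (Suc n) \<noteq> 0"
    using assms by (auto simp: prod_zero_iff)
  then show "bshift w (\<lambda>n. inverse (\<Prod>k=1..n. w k)) n = inverse (\<Prod>k=1..n. w k)"
    by (simp add: bshift_def prod.nat_ivl_Suc' field_simps)
qed

lemma invariant_measure_if_summable:
  fixes w :: "nat \<Rightarrow> 'a::real_normed_field"
  assumes p: "0 < p" and bounded: "bounded (w ` {1..})" and nonzero: "\<forall>n\<ge>1. w n \<noteq> 0"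
    and summable: "summable (\<lambda>n. 1 / norm (\<Prod>k=1..Suc n. w k) powr p)"
  shows "\<exists>m :: (nat \<Rightarrow> 'a) measure. prob_space m \<and> sets m = sets (lp_borel p) \<and>
            (\<forall>A\<in>sets (lp_borel p). emeasure m (bshift w -` A \<inter> space m) = emeasure m A) \<and>
            m \<noteq> return (lp_borel p) (\<lambda>_. 0)"
proof -
  define x where "x = (\<lambda>n. inverse (\<Prod>k=1..n. w k))"
  have norm_x: "norm (x n) powr p = 1 / norm (\<Prod>k=1..n. w k) powr p" for n
    by (simp add: x_def norm_inverse inverse_powr divide_inverse)
  have "summable (\<lambda>n. norm (x n) powr p)"
    unfolding norm_x by (rule summable_Suc_iff[THEN iffD1, OF summable])
  then have x_lp: "x \<in> lp p"
    by (simp add: lp_def)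
  have zero_lp: "(\<lambda>_. 0) \<in> lp p"
    by (simp add: lp_def)
  have "x \<noteq> (\<lambda>_. 0)"
    by (auto simp: x_def fun_eq_iff intro: exI[of _ 0])
  then have "return (lp_borel p) x \<noteq> return (lp_borel p) (\<lambda>_. 0)"
    using inj_on_return_lp_borel[OF p] x_lp zero_lp by (auto dest: inj_onD)
  moreover have "prob_space (return (lp_borel p) x)"
    using x_lp by (simp add: space_lp_borel prob_space_return)
  moreover have "emeasure (return (lp_borel p) x) (bshift w -` A \<inter> space (return (lp_borel p) x))
      = emeasure (return (lp_borel p) x) A" if "A \<in> sets (lp_borel p)" for A
    using x_lp bshift_fixes_inverse_partial_prod[OF nonzero] that
    by (intro emeasure_return_vimage_fixed_point[OF measurable_bshift[OF p bounded]])
      (simp_all add: x_def space_lp_borel)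
  ultimately show ?thesis
    by (intro exI[of _ "return (lp_borel p) x"]) simp
qed

lemma (in prob_space) prob_le_tendsto_1:
  assumes "X \<in> borel_measurable M"
  shows "(\<lambda>i. prob {x\<in>space M. X x \<le> real i}) \<longlonglongrightarrow> 1"
proof -
  have "(\<lambda>i. prob {x\<in>space M. X x \<le> real i}) \<longlonglongrightarrow> prob (\<Union>i. {x\<in>space M. X x \<le> real i})"
    using assms by (intro finite_Lim_measure_incseq) (auto simp: incseq_def)
  also have "(\<Union>i. {x\<in>space M. X x \<le> real i}) = space M"
    by (auto intro: real_arch_simple)
  finally show ?thesis
    by (simp add: prob_space)
qed

lemma (in prob_space) summable_if_lower_bounds_on_likely_events:
  fixes f :: "nat \<Rightarrow> 'a \<Rightarrow> real" and c :: "nat \<Rightarrow> real"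
  assumes f_measurable: "\<And>n. f n \<in> borel_measurable M"
    and f_nonneg: "\<And>n x. x \<in> space M \<Longrightarrow> 0 \<le> f n x"
    and f_summable: "\<And>x. x \<in> space M \<Longrightarrow> summable (\<lambda>n. f n x)"
    and D: "\<And>n. D n \<in> events" and \<delta>: "0 < \<delta>" "\<And>n. \<delta> \<le> prob (D n)"
    and c: "\<And>n. 0 \<le> c n" "\<And>n x. x \<in> D n \<Longrightarrow> c n \<le> f n x"
  shows "summable c"
proof -
  define S where "S x = (\<Sum>n. f n x)" for x
  have S_measurable: "S \<in> borel_measurable M"
    by (rule borel_measurable_LIMSEQ_real[where u="\<lambda>i x. \<Sum>n<i. f n x"])
      (auto simp: S_def intro!: borel_measurable_sum f_measurable intro: summable_LIMSEQ f_summable)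
  obtain i :: nat where i: "1 - \<delta>/2 < prob {x\<in>space M. S x \<le> real i}"
    using order_tendstoD(1)[OF prob_le_tendsto_1[OF S_measurable], of "1 - \<delta>/2"] \<delta>(1)
    by (auto simp: eventually_sequentially)
  define G where "G = {x\<in>space M. S x \<le> real i}"
  have G: "G \<in> events"
    unfolding G_def using S_measurable by measurable
  have DG: "\<delta>/2 \<le> prob (D n \<inter> G)" for n
  proof -
    have "\<delta> \<le> prob (D n)"
      by (rule \<delta>(2))
    also have "\<dots> \<le> prob ((D n \<inter> G) \<union> (space M - G))"
      using D[of n] D[of n, THEN sets.sets_into_space] G by (intro finite_measure_mono) auto
    also have "\<dots> \<le> prob (D n \<inter> G) + prob (space M - G)"
      using D G by (intro measure_Un_le) auto
    also have "prob (space M - G) = 1 - prob G"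
      using G by (rule prob_compl)
    finally show ?thesis
      using i by (simp add: G_def)
  qed
  have partial_sums: "(\<Sum>n<N. c n) * (\<delta>/2) \<le> real i" for N
  proof -
    define g where "g x = (\<Sum>n<N. c n * indicator (D n \<inter> G) x)" for x
    have g_integrable: "integrable M g"
      unfolding g_def using D G
      by (intro Bochner_Integration.integrable_sum integrable_mult_right integrable_real_indicator) (auto simp: less_top[symmetric])
    have g_le: "g x \<le> real i" if "x \<in> space M" for x
    proof (cases "x \<in> G")
      case True
      have "g x \<le> (\<Sum>n<N. f n x)"
        unfolding g_def using c(2) f_nonneg that by (intro sum_mono) (auto simp: indicator_def)
      also have "\<dots> \<le> S x"
        unfolding S_def using f_summable f_nonneg that by (intro sum_le_suminf) auto
      finally show ?thesis
        using True by (simp add: G_def)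
    qed (simp add: g_def)
    have "(\<Sum>n<N. c n) * (\<delta>/2) \<le> (\<Sum>n<N. c n * prob (D n \<inter> G))"
      unfolding sum_distrib_right by (intro sum_mono mult_left_mono DG c(1))
    also have "\<dots> = expectation g"
      unfolding g_def using D G
      by (subst Bochner_Integration.integral_sum) (auto intro!: integrable_mult_right integrable_real_indicator simp: less_top[symmetric])
    also have "\<dots> \<le> expectation (\<lambda>_. real i)"
      using g_integrable g_le by (intro integral_mono) auto
    finally show ?thesis
      by (simp add: prob_space)
  qed
  have "(\<Sum>n<N. c n) \<le> 2 * real i / \<delta>" for N
    using partial_sums[of N] \<delta>(1) by (simp add: field_simps)
  then show "summable c"
    by (rule summableI_nonneg_bounded[OF c(1)])
qed

lemma exists_coordinate_not_AE_zero:
  fixes M :: "(nat \<Rightarrow> 'b::zero) measure"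
  assumes "prob_space M" "M \<noteq> return M (\<lambda>_. 0)"
  shows "\<exists>k. \<not> (AE x in M. x k = 0)"
proof (rule ccontr)
  assume "\<nexists>k. \<not> (AE x in M. x k = 0)"
  then have "AE x in M. \<forall>k. x k = 0"
    by (simp add: AE_all_countable)
  then have "AE x in M. x = (\<lambda>_. 0)"
    by eventually_elim (simp add: fun_eq_iff)
  then show False
    using prob_space.AE_eq_constD(1)[OF assms(1)] assms(2) by blast
qed

lemma (in prob_space) exists_prob_norm_gt:
  fixes g :: "'a \<Rightarrow> 'b::real_normed_vector"
  assumes g: "g \<in> borel_measurable M" and not_AE_zero: "\<not> (AE x in M. g x = 0)"
  shows "\<exists>\<epsilon>>0. 0 < prob {x\<in>space M. \<epsilon> < norm (g x)}"
proof (rule ccontr)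
  assume no_eps: "\<not> ?thesis"
  have "prob {x\<in>space M. inverse (real (Suc j)) < norm (g x)} = 0" for j
  proof -
    have "0 < inverse (real (Suc j))"
      by simp
    then show ?thesis
      using no_eps measure_nonneg[of M] by (meson antisym not_le)
  qed
  then have "AE x in M. \<not> inverse (real (Suc j)) < norm (g x)" for j
    using g by (subst (asm) prob_eq_0) auto
  then have "AE x in M. \<forall>j. norm (g x) \<le> inverse (real (Suc j))"
    by (simp add: AE_all_countable not_less)
  then have "AE x in M. g x = 0"
  proof eventually_elim
    case (elim x)
    show "g x = 0"
    proof (rule ccontr)
      assume "g x \<noteq> 0"
      then obtain n where "0 < n" "inverse (real n) < norm (g x)"
        using ex_inverse_of_nat_less[of "norm (g x)"] by auto
      then show False
        using elim[rule_format, of "n - 1"] by simp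
    qed
  qed
  with not_AE_zero show False
    by blast
qed

lemma vimage_bshift_level_set:
  fixes w :: "nat \<Rightarrow> 'a::real_normed_field"
  assumes "bshift w \<in> lp p \<rightarrow> lp p"
  shows "bshift w -` {x\<in>lp p. \<epsilon> < norm ((\<Prod>k=1..n. w k) * x n)} \<inter> lp p
    = {x\<in>lp p. \<epsilon> < norm ((\<Prod>k=1..Suc n. w k) * x (Suc n))}"
proof -
  have "bshift w x n = w (Suc n) * x (Suc n)" for x
    by (simp add: bshift_def)
  with assms show ?thesis
    by (auto simp: prod.nat_ivl_Suc' mult_ac)
qed

lemma summable_level_bounds_if_invariant:
  fixes w :: "nat \<Rightarrow> 'a::real_normed_field" and m :: "(nat \<Rightarrow> 'a) measure"
  assumes p: "0 < p" and bounded: "bounded (w ` {1..})" and nonzero: "\<forall>n\<ge>1. w n \<noteq> 0"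
    and "prob_space m" and sets_m: "sets m = sets (lp_borel p)"
    and invariant: "\<forall>A\<in>sets (lp_borel p). emeasure m (bshift w -` A \<inter> space m) = emeasure m A"
    and "0 < \<epsilon>" and charged: "0 < measure m {x\<in>space m. \<epsilon> < norm ((\<Prod>k=1..j. w k) * x j)}"
  shows "summable (\<lambda>n. (\<epsilon> / norm (\<Prod>k=1..n. w k)) powr p)"
proof -
  interpret prob_space m by fact
  define D where "D n = {x\<in>space m. \<epsilon> < norm ((\<Prod>k=1..n. w k) * x n)}" for n
  have space_m: "space m = lp p"
    using sets_eq_imp_space_eq[OF sets_m] by (simp add: space_lp_borel)
  have [measurable]: "(\<lambda>x. x n) \<in> borel_measurable m" "(\<lambda>x. c * x n) \<in> borel_measurable m" for c n
    using measurable_coordinate_lp_borel[OF p] measurable_scaled_coordinate_lp_borel[OF p]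
    by (simp_all add: measurable_cong_sets[OF sets_m refl])
  have D_events: "D n \<in> events" for n
    unfolding D_def by measurable
  have "bshift w \<in> lp p \<rightarrow> lp p"
    using measurable_space[OF measurable_bshift[OF p bounded]] by (auto simp: space_lp_borel)
  then have vimage_D: "bshift w -` D n \<inter> space m = D (Suc n)" for n
    unfolding D_def space_m by (rule vimage_bshift_level_set)
  have "prob (D (Suc n)) = prob (D n)" for n
    using invariant D_events[of n] sets_m unfolding vimage_D[symmetric] measure_def by simp
  then have prob_D_0: "prob (D n) = prob (D 0)" for n
    by (induction n) simp_all
  show ?thesis
  proof (rule summable_if_lower_bounds_on_likely_events[where \<delta> = "prob (D j)"])
    show "(\<lambda>x. norm (x n) powr p) \<in> borel_measurable m" for n
      by measurable
    show "x \<in> space m \<Longrightarrow> summable (\<lambda>n. norm (x n) powr p)" for x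
      by (simp add: space_m lp_def)
    show "(\<epsilon> / norm (\<Prod>k=1..n. w k)) powr p \<le> norm (x n) powr p" if "x \<in> D n" for n x
    proof -
      have "(\<Prod>k=1..n. w k) \<noteq> 0"
        using nonzero by (auto simp: prod_zero_iff)
      then have "\<epsilon> / norm (\<Prod>k=1..n. w k) < norm (x n)"
        using that by (simp add: D_def norm_mult field_simps)
      then show ?thesis
        using \<open>0 < \<epsilon>\<close> p by (intro powr_mono2) auto
    qed
    show "prob (D j) \<le> prob (D n)" for n
      using prob_D_0[of n] prob_D_0[of j] by simp
  qed (use D_events charged in \<open>auto simp: D_def\<close>)
qed

lemma summable_if_invariant_measure:
  fixes w :: "nat \<Rightarrow> 'a::real_normed_field" and m :: "(nat \<Rightarrow> 'a) measure"
  assumes p: "0 < p" and bounded: "bounded (w ` {1..})" and nonzero: "\<forall>n\<ge>1. w n \<noteq> 0"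
    and "prob_space m" and sets_m: "sets m = sets (lp_borel p)"
    and invariant: "\<forall>A\<in>sets (lp_borel p). emeasure m (bshift w -` A \<inter> space m) = emeasure m A"
    and nontrivial: "m \<noteq> return (lp_borel p) (\<lambda>_. 0)"
  shows "summable (\<lambda>n. 1 / norm (\<Prod>k=1..Suc n. w k) powr p)"
proof -
  interpret prob_space m by fact
  obtain j where "\<not> (AE x in m. x j = 0)"
    using exists_coordinate_not_AE_zero[OF \<open>prob_space m\<close>] nontrivial return_cong[OF sets_m] by metis
  moreover have "(\<Prod>k=1..j. w k) \<noteq> 0"
    using nonzero by (auto simp: prod_zero_iff)
  ultimately have "\<not> (AE x in m. (\<Prod>k=1..j. w k) * x j = 0)"
    by simp
  moreover have "(\<lambda>x. (\<Prod>k=1..j. w k) * x j) \<in> borel_measurable m"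
    using measurable_scaled_coordinate_lp_borel[OF p] by (simp add: measurable_cong_sets[OF sets_m refl])
  ultimately obtain \<epsilon> where "0 < \<epsilon>"
    and "0 < prob {x\<in>space m. \<epsilon> < norm ((\<Prod>k=1..j. w k) * x j)}"
    using exists_prob_norm_gt by blast
  then have "summable (\<lambda>n. (\<epsilon> / norm (\<Prod>k=1..n. w k)) powr p)"
    by (intro summable_level_bounds_if_invariant[OF p bounded nonzero \<open>prob_space m\<close> sets_m invariant])
  then have "summable (\<lambda>n. (\<epsilon> / norm (\<Prod>k=1..Suc n. w k)) powr p / \<epsilon> powr p)"
    by (intro summable_divide) (rule summable_Suc_iff[THEN iffD2])
  then show ?thesis
    using \<open>0 < \<epsilon>\<close> by (simp add: powr_divide)
qed

theorem proposition2p1: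
  fixes p :: real and w :: "nat \<Rightarrow> 'a::{real_normed_field, banach}"
  assumes "1 \<le> p"
    and "bounded (w ` {1..})"
    and "\<forall>n\<ge>1. w n \<noteq> 0"
  shows "(\<exists>m :: (nat \<Rightarrow> 'a) measure. prob_space m \<and> sets m = sets (lp_borel p) \<and>
            (\<forall>A\<in>sets (lp_borel p). emeasure m (bshift w -` A \<inter> space m) = emeasure m A) \<and>
            m \<noteq> return (lp_borel p) (\<lambda>_. 0))
         \<longleftrightarrow> summable (\<lambda>n. 1 / norm (\<Prod>k=1..Suc n. w k) powr p)"
proof -
  have p: "0 < p"
    using assms(1) by simp
  show ?thesis
  proof
    assume "\<exists>m :: (nat \<Rightarrow> 'a) measure. prob_space m \<and> sets m = sets (lp_borel p) \<and>
      (\<forall>A\<in>sets (lp_borel p). emeasure m (bshift w -` A \<inter> space m) = emeasure m A) \<and>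
      m \<noteq> return (lp_borel p) (\<lambda>_. 0)"
    then show "summable (\<lambda>n. 1 / norm (\<Prod>k=1..Suc n. w k) powr p)"
      by (elim exE conjE) (rule summable_if_invariant_measure[OF p assms(2,3)])
  qed (rule invariant_measure_if_summable[OF p assms(2,3)])
qed

end
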